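(* Let $Z$ be a finite set with an abelian groupoid $\bigoplus_{\lambda\in\Lambda}G_\lambda$, let $X$ be a finite set, and let $\bar M: X\to Z$ be a $Z$-valued demolition measurement on $X$ (for this groupoid). For $\lambda\in\Lambda$ let $\bar M_\lambda := \rho_{G_\lambda}^\dagger\circ\bar M : X\to 1$. Then there exist an abelian groupoid $\bigoplus_{\gamma\in\Gamma} H_\gamma$ on $X$ and a function $f:\Gamma\to\Lambda$ such that for every $\lambda\in\Lambda$ $$\bar M_\lambda = \bigcup_{\gamma\in\Gamma,\ f(\gamma)=\lambda} D_\gamma,$$ where $D_\gamma := \rho_{H_\gamma}^\dagger\circ\mathrm{dec}_X : X\to 1$ and $\mathrm{dec}_X$ is the decoherence map of the groupoid $\bigoplus_\gamma H_\gamma$ on $X$.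
   Context: $\mathbf{fRel}$: finite sets and relations, relational composition, tensor the cartesian product with unit $1=\{\star\}$, dagger the converse relation. For a relation $g\subseteq X\times Y$, its pure CPM map is $\hat g = \{((x,x'),(y,y')) : (x,y)\in g,\ (x',y')\in g\}\subseteq (X\times X)\times(Y\times Y)$. A CPM map $X\to Y$ is a relation $R\subseteq (X\times X)\times(Y\times Y)$ of the form $\{((x,x'),(y,y')):\exists e\in E,\ (x,(e,y))\in h,\ (x',(e,y'))\in h\}$ for some finite $E$ and $h\subseteq X\times(E\times Y)$; CPM maps compose relationally, $\mathrm{id}_X=\widehat{\mathrm{id}_X}$, the dagger is the converse relation, and the tensor of $R:X\to Y$ and $S:U\to V$ is $\{(((x,u),(x',u')),((y,v),(y',v'))) : ((x,x'),(y,y'))\in R,\ ((u,u'),(v,v'))\in S\}$. The discarding map is $\cap_X = \{((x,x),\star): x\in X\}: X\to 1$; a CPM map $R:X\to Y$ is causal if $\cap_Y\circ R=\cap_X$. An abelian groupoid on a finite set $Z$ is a family of abelian groups $(G_\lambda,+,0_\lambda)_{\lambda\in\Lambda}$ with pairwise disjoint underlying sets covering $Z$. For it: comultiplication $\delta=\{(g,(g',g'')): g,g',g''\in G_\lambda\text{ for some }\lambda,\ g'+g''=g\}\subseteq Z\times(Z\times Z)$; pairing $e=\{((g,h),\star): g,h\in G_\lambda\text{ for some }\lambda,\ g+h=0_\lambda\}\subseteq (Z\times Z)\times 1$; decoherence map $\mathrm{dec}_Z=\{((x,x'),(y,y')) : \exists\lambda,\ x,x',y,y'\in G_\lambda,\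 x-y=x'-y'\}: Z\to Z$; and $\rho_{G_\lambda}=G_\lambda\times G_\lambda$, viewed as the pure CPM state $1\to Z$, with $\rho_{G_\lambda}^\dagger=\{((g,g'),\star):g,g'\in G_\lambda\}:Z\to 1$. A $Z$-valued non-demolition measurement on $X$ is a causal CPM map $M: X\to X\times Z$ of the form $M=(\mathrm{id}_X\times\mathrm{dec}_Z)\circ\hat P$ for some relation $P\subseteq X\times(X\times Z)$, satisfying (idempotence) $(M\times\mathrm{id}_Z)\circ M = (\mathrm{id}_X\times\hat\delta)\circ M$ as CPM maps $X\to X\times Z\times Z$ (on the left, the $Z$-output of the first application of $M$ is the last factor), and (self-adjointness) $(\mathrm{id}_X\times\hat e)\circ(M\times\mathrm{id}_Z) = \widehat{P^\dagger}\circ(\mathrm{id}_X\times\mathrm{dec}_Z)$ as CPM maps $X\times Z\to X$. A $Z$-valued demolition measurement on $X$ is a CPM map of the form $\bar M=(\cap_X\times\mathrm{id}_Z)\circ M: X\to Z$ for such an $M$. *)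

theory Defs
  imports "HOL-Algebra.Group"
begin

text \<open>Objects are finite carrier sets (subsets of a type); morphisms are relations
 (sets of pairs). The unit object 1 is the type unit. Relational composition
 "S after R" is written  R O S  (first R, then S). A CPM map X to Y is a relation
 between X x X and Y x Y.\<close>

definition cpm_hat :: "('a \<times> 'b) set \<Rightarrow> (('a \<times> 'a) \<times> ('b \<times> 'b)) set" where
  "cpm_hat g = {((x, x'), (y, y')) | x x' y y'. (x, y) \<in> g \<and> (x', y') \<in> g}"

definition cpm_id :: "'a set \<Rightarrow> (('a \<times> 'a) \<times> ('a \<times> 'a)) set" where
  "cpm_id X = cpm_hat (Id_on X)"

definition cpm_tensor ::
  "(('a \<times> 'a) \<times> ('b \<times> 'b)) set \<Rightarrow> (('c \<times> 'c) \<times> ('d \<times> 'd)) set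
   \<Rightarrow> ((('a \<times> 'c) \<times> ('a \<times> 'c)) \<times> (('b \<times> 'd) \<times> ('b \<times> 'd))) set" where
  "cpm_tensor R S = {(((x, u), (x', u')), ((y, v), (y', v'))) | x x' u u' y y' v v'.
      ((x, x'), (y, y')) \<in> R \<and> ((u, u'), (v, v')) \<in> S}"

text \<open>CPM maps: of the Stinespring-like form for some finite environment E
 (any finite set is in bijection with a finite set of naturals).\<close>
definition is_cpm :: "'a set \<Rightarrow> 'b set \<Rightarrow> (('a \<times> 'a) \<times> ('b \<times> 'b)) set \<Rightarrow> bool" where
  "is_cpm X Y R \<longleftrightarrow> (\<exists>(E :: nat set) h. finite E \<and> h \<subseteq> X \<times> (E \<times> Y) \<and>
     R = {((x, x'), (y, y')) | x x' y y'. \<exists>e\<in>E. (x, (e, y)) \<in> h \<and> (x', (e, y')) \<in> h})"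

definition discard :: "'a set \<Rightarrow> (('a \<times> 'a) \<times> (unit \<times> unit)) set" where
  "discard X = {((x, x), ((), ())) | x. x \<in> X}"

definition causal :: "'a set \<Rightarrow> 'b set \<Rightarrow> (('a \<times> 'a) \<times> ('b \<times> 'b)) set \<Rightarrow> bool" where
  "causal X Y R \<longleftrightarrow> R O discard Y = discard X"

definition assoc_rel :: "'a set \<Rightarrow> 'b set \<Rightarrow> 'c set \<Rightarrow> ((('a \<times> 'b) \<times> 'c) \<times> ('a \<times> ('b \<times> 'c))) set" where
  "assoc_rel A B C = {(((a, b), c), (a, (b, c))) | a b c. a \<in> A \<and> b \<in> B \<and> c \<in> C}"

definition runit_rel :: "'a set \<Rightarrow> (('a \<times> unit) \<times> 'a) set" where
  "runit_rel A = {((a, ()), a) | a. a \<in> A}"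

definition lunit_rel :: "'a set \<Rightarrow> ((unit \<times> 'a) \<times> 'a) set" where
  "lunit_rel A = {(((), a), a) | a. a \<in> A}"

definition abelian_groupoid :: "'z set \<Rightarrow> 'l set \<Rightarrow> ('l \<Rightarrow> 'z monoid) \<Rightarrow> bool" where
  "abelian_groupoid Z L G \<longleftrightarrow>
     (\<forall>l\<in>L. comm_group (G l)) \<and>
     (\<forall>l\<in>L. \<forall>m\<in>L. l \<noteq> m \<longrightarrow> carrier (G l) \<inter> carrier (G m) = {}) \<and>
     (\<Union>l\<in>L. carrier (G l)) = Z"

definition gd_comult :: "'l set \<Rightarrow> ('l \<Rightarrow> 'z monoid) \<Rightarrow> ('z \<times> ('z \<times> 'z)) set" where
  "gd_comult L G = {(g, (g', g'')) | g g' g''. \<exists>l\<in>L.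
      g \<in> carrier (G l) \<and> g' \<in> carrier (G l) \<and> g'' \<in> carrier (G l) \<and> g' \<otimes>\<^bsub>G l\<^esub> g'' = g}"

definition gd_pair :: "'l set \<Rightarrow> ('l \<Rightarrow> 'z monoid) \<Rightarrow> (('z \<times> 'z) \<times> unit) set" where
  "gd_pair L G = {((g, h), ()) | g h. \<exists>l\<in>L.
      g \<in> carrier (G l) \<and> h \<in> carrier (G l) \<and> g \<otimes>\<^bsub>G l\<^esub> h = \<one>\<^bsub>G l\<^esub>}"

definition gd_dec :: "'l set \<Rightarrow> ('l \<Rightarrow> 'z monoid) \<Rightarrow> (('z \<times> 'z) \<times> ('z \<times> 'z)) set" where
  "gd_dec L G = {((x, x'), (y, y')) | x x' y y'. \<exists>l\<in>L.
      x \<in> carrier (G l) \<and> x' \<in> carrier (G l) \<and> y \<in> carrier (G l) \<and> y' \<in> carrier (G l) \<and>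
      x \<otimes>\<^bsub>G l\<^esub> inv\<^bsub>G l\<^esub> y = x' \<otimes>\<^bsub>G l\<^esub> inv\<^bsub>G l\<^esub> y'}"

text \<open>The dagger of the pure state rho_{G_l} = G_l x G_l, as a CPM effect Z -> 1.\<close>
definition rho_dag :: "'z monoid \<Rightarrow> (('z \<times> 'z) \<times> (unit \<times> unit)) set" where
  "rho_dag H = {((g, g'), ((), ())) | g g'. g \<in> carrier H \<and> g' \<in> carrier H}"

definition nd_measurement ::
  "'x set \<Rightarrow> 'z set \<Rightarrow> 'l set \<Rightarrow> ('l \<Rightarrow> 'z monoid) \<Rightarrow> ('x \<times> ('x \<times> 'z)) set
   \<Rightarrow> (('x \<times> 'x) \<times> (('x \<times> 'z) \<times> ('x \<times> 'z))) set \<Rightarrow> bool" where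
  "nd_measurement X Z L G P M \<longleftrightarrow>
     P \<subseteq> X \<times> (X \<times> Z) \<and>
     M = cpm_hat P O cpm_tensor (cpm_id X) (gd_dec L G) \<and>
     is_cpm X (X \<times> Z) M \<and>
     causal X (X \<times> Z) M \<and>
     \<comment> \<open>idempotence: (M x id_Z) . M = (id_X x delta^) . M, up to associativity\<close>
     M O cpm_tensor M (cpm_id Z) O cpm_hat (assoc_rel X Z Z)
       = M O cpm_tensor (cpm_id X) (cpm_hat (gd_comult L G)) \<and>
     \<comment> \<open>self-adjointness: (id_X x e^) . (M x id_Z) = (P^dagger)^ . (id_X x dec_Z), up to associator/unitor\<close>
     cpm_tensor M (cpm_id Z) O cpm_hat (assoc_rel X Z Z)
        O cpm_tensor (cpm_id X) (cpm_hat (gd_pair L G)) O cpm_hat (runit_rel X)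
       = cpm_tensor (cpm_id X) (gd_dec L G) O cpm_hat (converse P)"

definition demolition :: "'x set \<Rightarrow> 'z set
   \<Rightarrow> (('x \<times> 'x) \<times> (('x \<times> 'z) \<times> ('x \<times> 'z))) set \<Rightarrow> (('x \<times> 'x) \<times> ('z \<times> 'z)) set" where
  "demolition X Z M = M O cpm_tensor (discard X) (cpm_id Z) O cpm_hat (lunit_rel Z)"

end

theory Submission
  imports Defs "HOL-Algebra.Elementary_Groups" "HOL-Algebra.Weak_Morphisms"
begin

text \<open>The axioms of a non-demolition measurement, read off on single outcomes, say that
 the relation "x can be sent to y" is an equivalence on X (reflexive by causality,
 symmetric by self-adjointness, transitive by idempotence), and that all outcomes
 produced from x, or from anything equivalent to x, lie in one group of the groupoid
 on Z; call it the label of x. Composing with the effect of a group kills the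
 decoherence, so the demolition measurement followed by the effect of G_l is the full
 effect on the union of the classes labelled l. Making every class a group in any way
 (e.g. cyclically) and labelling it accordingly gives the groupoid on X.\<close>

lemma ex_comm_group_with_carrier:
  fixes B :: "'a set"
  assumes "finite B" "B \<noteq> {}"
  shows "\<exists>H :: 'a monoid. comm_group H \<and> carrier H = B"
proof -
  define n where "n = card B"
  have "n > 0" using assms by (simp add: n_def card_gt_0_iff)
  then have carrier: "carrier (integer_mod_group n) = {0..<int n}"
    by (simp add: carrier_integer_mod_group)
  obtain f where f: "bij_betw f {0..<int n} B"
    using finite_same_card_bij[OF _ assms(1), of "{0..<int n}"] n_def by auto
  have iso: "f \<in> iso (integer_mod_group n) (image_group f (integer_mod_group n))"
    using f carrier by (intro inj_imp_image_group_iso) (simp add: bij_betw_def)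
  have "comm_group (integer_mod_group n)" by simp
  from comm_group.iso_imp_img_comm_group[OF this iso]
  have "comm_group (image_group f (integer_mod_group n))"
    by (simp add: image_group_def)
  moreover have "carrier (image_group f (integer_mod_group n)) = B"
    using f carrier by (simp add: image_group_carrier bij_betw_def)
  ultimately show ?thesis by blast
qed

lemma abelian_groupoid_component_unique:
  assumes "abelian_groupoid Z L G" "l \<in> L" "m \<in> L"
    and "z \<in> carrier (G l)" "z \<in> carrier (G m)"
  shows "l = m"
  using assms unfolding abelian_groupoid_def by blast

lemma rho_dag_eq: "rho_dag H = (carrier H \<times> carrier H) \<times> {((), ())}"
  by (auto simp: rho_dag_def)

lemma gd_dec_O_rho_dag:
  assumes groupoid: "abelian_groupoid Z L G" and "l \<in> L"
  shows "gd_dec L G O rho_dag (G l) = rho_dag (G l)"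
proof (intro equalityI subsetI)
  fix p assume "p \<in> gd_dec L G O rho_dag (G l)"
  then obtain x x' y y' m where p: "p = ((x, x'), ((), ()))" "m \<in> L"
      and in_m: "x \<in> carrier (G m)" "x' \<in> carrier (G m)" "y \<in> carrier (G m)"
      and "y \<in> carrier (G l)"
    by (auto simp: gd_dec_def rho_dag_def)
  then have "m = l"
    using abelian_groupoid_component_unique[OF groupoid] \<open>l \<in> L\<close> by blast
  then show "p \<in> rho_dag (G l)" using p in_m by (simp add: rho_dag_eq)
next
  fix p assume "p \<in> rho_dag (G l)"
  then obtain x x' where p: "p = ((x, x'), ((), ()))"
      and x: "x \<in> carrier (G l)" "x' \<in> carrier (G l)"
    by (auto simp: rho_dag_def)
  interpret comm_group "G l" using groupoid \<open>l \<in> L\<close> by (simp add: abelian_groupoid_def)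
  have "((x, x'), (x, x')) \<in> gd_dec L G"
    using x \<open>l \<in> L\<close> unfolding gd_dec_def by auto
  then show "p \<in> gd_dec L G O rho_dag (G l)"
    using p x by (auto simp: rho_dag_def)
qed

lemma abelian_groupoid_on_quotient:
  fixes X :: "'a set"
  assumes "finite X" "equiv X r"
  shows "\<exists>(\<Gamma> :: nat set) (H :: nat \<Rightarrow> 'a monoid).
           abelian_groupoid X \<Gamma> H \<and> (\<lambda>\<gamma>. carrier (H \<gamma>)) ` \<Gamma> = X // r"
proof -
  define Q where "Q = X // r"
  have "finite Q" using assms by (simp add: Q_def finite_quotient equiv_type)
  then obtain h where h: "bij_betw h {0..<card Q} Q" using ex_bij_betw_nat_finite by blast
  have "\<forall>C\<in>Q. \<exists>K :: 'a monoid. comm_group K \<and> carrier K = C"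
  proof
    fix C assume "C \<in> Q"
    then have "finite C" "C \<noteq> {}"
      using finite_equiv_class[OF assms(1) equiv_type[OF assms(2)]]
        in_quotient_imp_non_empty[OF assms(2)]
      by (simp_all add: Q_def)
    then show "\<exists>K :: 'a monoid. comm_group K \<and> carrier K = C"
      by (rule ex_comm_group_with_carrier)
  qed
  then have "\<exists>K :: 'a set \<Rightarrow> 'a monoid. \<forall>C\<in>Q. comm_group (K C) \<and> carrier (K C) = C"
    by (rule bchoice)
  then obtain K :: "'a set \<Rightarrow> 'a monoid"
    where K: "\<And>C. C \<in> Q \<Longrightarrow> comm_group (K C) \<and> carrier (K C) = C"
    by blast
  define \<Gamma> where "\<Gamma> = {0..<card Q}"
  define H where "H = K \<circ> h"
  have h_in: "\<gamma> \<in> \<Gamma> \<Longrightarrow> h \<gamma> \<in> Q" for \<gamma> using h by (auto simp: \<Gamma>_def bij_betw_def)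
  have carrier_H: "\<gamma> \<in> \<Gamma> \<Longrightarrow> carrier (H \<gamma>) = h \<gamma>" for \<gamma> using K h_in by (simp add: H_def)
  have carriers: "(\<lambda>\<gamma>. carrier (H \<gamma>)) ` \<Gamma> = Q"
    using carrier_H h by (simp add: \<Gamma>_def bij_betw_def)
  have "abelian_groupoid X \<Gamma> H"
    unfolding abelian_groupoid_def
  proof (intro conjI ballI impI)
    show "comm_group (H \<gamma>)" if "\<gamma> \<in> \<Gamma>" for \<gamma> using K h_in[OF that] by (simp add: H_def)
  next
    fix \<gamma> \<delta> assume "\<gamma> \<in> \<Gamma>" "\<delta> \<in> \<Gamma>" "\<gamma> \<noteq> \<delta>"
    then have "h \<gamma> \<noteq> h \<delta>" using h by (auto simp: \<Gamma>_def bij_betw_def inj_on_def)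
    then have "h \<gamma> \<inter> h \<delta> = {}"
      using quotient_disj[OF assms(2)] h_in \<open>\<gamma> \<in> \<Gamma>\<close> \<open>\<delta> \<in> \<Gamma>\<close> unfolding Q_def by blast
    then show "carrier (H \<gamma>) \<inter> carrier (H \<delta>) = {}"
      using carrier_H \<open>\<gamma> \<in> \<Gamma>\<close> \<open>\<delta> \<in> \<Gamma>\<close> by simp
  next
    show "(\<Union>\<gamma>\<in>\<Gamma>. carrier (H \<gamma>)) = X"
      using carriers Union_quotient[OF assms(2)] by (simp add: Q_def)
  qed
  then show ?thesis using carriers unfolding Q_def by blast
qed

lemma abelian_groupoid_on_labelled_quotient:
  fixes X :: "'a set" and lab :: "'a \<Rightarrow> 'l"
  assumes "finite X" and equiv: "equiv X r"
    and lab_invariant: "\<And>x x'. (x, x') \<in> r \<Longrightarrow> lab x = lab x'"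
  shows "\<exists>(\<Gamma> :: nat set) (H :: nat \<Rightarrow> 'a monoid) (f :: nat \<Rightarrow> 'l).
           abelian_groupoid X \<Gamma> H \<and> f ` \<Gamma> \<subseteq> lab ` X \<and>
           (\<forall>l. {p \<in> r. lab (fst p) = l}
                = (\<Union>\<gamma>\<in>{\<gamma>\<in>\<Gamma>. f \<gamma> = l}. carrier (H \<gamma>) \<times> carrier (H \<gamma>)))"
proof -
  obtain \<Gamma> :: "nat set" and H :: "nat \<Rightarrow> 'a monoid"
    where groupoid: "abelian_groupoid X \<Gamma> H"
      and carriers: "(\<lambda>\<gamma>. carrier (H \<gamma>)) ` \<Gamma> = X // r"
    using abelian_groupoid_on_quotient[OF assms(1,2)] by blast
  define f where "f \<gamma> = lab (SOME x. x \<in> carrier (H \<gamma>))" for \<gamma>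
  have is_class: "carrier (H \<gamma>) \<in> X // r" if "\<gamma> \<in> \<Gamma>" for \<gamma> using carriers that by blast
  have f_lab: "f \<gamma> = lab x" if "\<gamma> \<in> \<Gamma>" "x \<in> carrier (H \<gamma>)" for \<gamma> x
  proof -
    have "(SOME x. x \<in> carrier (H \<gamma>)) \<in> carrier (H \<gamma>)" using that(2) by (rule someI)
    then show ?thesis
      using lab_invariant in_quotient_imp_in_rel[OF equiv is_class[OF that(1)]] that(2)
      by (simp add: f_def)
  qed
  have "f ` \<Gamma> \<subseteq> lab ` X"
  proof
    fix l assume "l \<in> f ` \<Gamma>"
    then obtain \<gamma> where \<gamma>: "\<gamma> \<in> \<Gamma>" "l = f \<gamma>" by blast
    then obtain x where "x \<in> carrier (H \<gamma>)"
      using in_quotient_imp_non_empty[OF equiv is_class] by blast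
    then show "l \<in> lab ` X"
      using \<gamma> f_lab in_quotient_imp_subset[OF equiv is_class[OF \<gamma>(1)]] by blast
  qed
  moreover have "{p \<in> r. lab (fst p) = l}
      = (\<Union>\<gamma>\<in>{\<gamma>\<in>\<Gamma>. f \<gamma> = l}. carrier (H \<gamma>) \<times> carrier (H \<gamma>))" for l
  proof (intro equalityI subsetI)
    fix p assume "p \<in> {p \<in> r. lab (fst p) = l}"
    then obtain x x' where p: "p = (x, x')" "(x, x') \<in> r" "lab x = l" by (cases p) auto
    have x: "x \<in> X" "x \<in> r``{x}" "x' \<in> r``{x}"
      using p(2) equiv_type[OF equiv] equiv_class_self[OF equiv] by blast+
    have "r``{x} \<in> (\<lambda>\<gamma>. carrier (H \<gamma>)) ` \<Gamma>"
      using carriers quotientI[OF x(1)] by simp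
    then obtain \<gamma> where \<gamma>: "\<gamma> \<in> \<Gamma>" "carrier (H \<gamma>) = r``{x}" by blast
    then have "f \<gamma> = l" using f_lab x(2) p(3) by simp
    then show "p \<in> (\<Union>\<gamma>\<in>{\<gamma>\<in>\<Gamma>. f \<gamma> = l}. carrier (H \<gamma>) \<times> carrier (H \<gamma>))"
      using p(1) x \<gamma> by blast
  next
    fix p assume "p \<in> (\<Union>\<gamma>\<in>{\<gamma>\<in>\<Gamma>. f \<gamma> = l}. carrier (H \<gamma>) \<times> carrier (H \<gamma>))"
    then obtain \<gamma> x x' where \<gamma>: "\<gamma> \<in> \<Gamma>" "f \<gamma> = l" "p = (x, x')"
        and x: "x \<in> carrier (H \<gamma>)" "x' \<in> carrier (H \<gamma>)"
      by blast
    then have "(x, x') \<in> r" using in_quotient_imp_in_rel[OF equiv is_class[OF \<gamma>(1)]] by blast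
    then show "p \<in> {p \<in> r. lab (fst p) = l}" using \<gamma> x f_lab by simp
  qed
  ultimately show ?thesis using groupoid by blast
qed

definition gd_component :: "'l set \<Rightarrow> ('l \<Rightarrow> 'z monoid) \<Rightarrow> 'z \<Rightarrow> 'l" where
  "gd_component L G z = (THE l. l \<in> L \<and> z \<in> carrier (G l))"

lemma gd_component:
  assumes "abelian_groupoid Z L G" "z \<in> Z"
  shows "gd_component L G z \<in> L" "z \<in> carrier (G (gd_component L G z))"
proof -
  obtain l where l: "l \<in> L" "z \<in> carrier (G l)"
    using assms unfolding abelian_groupoid_def by blast
  then have "gd_component L G z = l"
    unfolding gd_component_def
    using abelian_groupoid_component_unique[OF assms(1)] by blast
  then show "gd_component L G z \<in> L" "z \<in> carrier (G (gd_component L G z))" using l by simp_all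
qed

lemma in_carrier_iff_gd_component:
  assumes "abelian_groupoid Z L G" "l \<in> L"
  shows "z \<in> carrier (G l) \<longleftrightarrow> z \<in> Z \<and> gd_component L G z = l"
  using gd_component[OF assms(1)] abelian_groupoid_component_unique[OF assms] assms
  unfolding abelian_groupoid_def by blast

lemma gd_component_eq:
  assumes "abelian_groupoid Z L G" "l \<in> L" "a \<in> carrier (G l)" "b \<in> carrier (G l)"
  shows "gd_component L G a = gd_component L G b"
  using in_carrier_iff_gd_component[OF assms(1,2)] assms(3,4) by simp

locale nd_measurement_on_groupoid =
  fixes X :: "'x set" and Z :: "'z set" and L :: "'l set" and G :: "'l \<Rightarrow> 'z monoid"
    and P :: "('x \<times> ('x \<times> 'z)) set"
    and M :: "(('x \<times> 'x) \<times> (('x \<times> 'z) \<times> ('x \<times> 'z))) set"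
  assumes groupoid: "abelian_groupoid Z L G"
    and measurement: "nd_measurement X Z L G P M"
begin

abbreviation component :: "'z \<Rightarrow> 'l" where "component \<equiv> gd_component L G"

lemma P_subset: "P \<subseteq> X \<times> (X \<times> Z)"
  using measurement by (simp add: nd_measurement_def)

lemma P_memD: "(x, (y, z)) \<in> P \<Longrightarrow> x \<in> X \<and> y \<in> X \<and> z \<in> Z"
  using P_subset by auto

lemma M_eq: "M = cpm_hat P O cpm_tensor (cpm_id X) (gd_dec L G)"
  using measurement by (simp add: nd_measurement_def)

lemma causality: "M O discard (X \<times> Z) = discard X"
  using measurement unfolding nd_measurement_def causal_def by (elim conjE)

lemma idempotence:
  "M O cpm_tensor M (cpm_id Z) O cpm_hat (assoc_rel X Z Z)
     = M O cpm_tensor (cpm_id X) (cpm_hat (gd_comult L G))"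
  using measurement unfolding nd_measurement_def by (elim conjE)

lemma self_adjointness:
  "cpm_tensor M (cpm_id Z) O cpm_hat (assoc_rel X Z Z)
      O cpm_tensor (cpm_id X) (cpm_hat (gd_pair L G)) O cpm_hat (runit_rel X)
     = cpm_tensor (cpm_id X) (gd_dec L G) O cpm_hat (converse P)"
  using measurement unfolding nd_measurement_def by (elim conjE)

lemma M_mem_iff:
  "((x, x'), ((y, w), (y', w'))) \<in> M \<longleftrightarrow>
     (\<exists>z z'. (x, (y, z)) \<in> P \<and> (x', (y', z')) \<in> P \<and> ((z, z'), (w, w')) \<in> gd_dec L G)"
  using P_subset unfolding M_eq
  by (auto simp: cpm_hat_def cpm_tensor_def cpm_id_def relcomp_unfold) blast+

lemma M_diagonal:
  assumes "(x, (y, z)) \<in> P"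
  shows "((x, x), ((y, z), (y, z))) \<in> M"
proof -
  interpret comm_group "G (component z)"
    using groupoid gd_component[OF groupoid] P_memD[OF assms]
    by (simp add: abelian_groupoid_def)
  have "((z, z), (z, z)) \<in> gd_dec L G"
    using gd_component[OF groupoid] P_memD[OF assms] unfolding gd_dec_def by fastforce
  then show ?thesis using assms by (auto simp: M_mem_iff)
qed

lemma output_exists:
  assumes "x \<in> X"
  shows "\<exists>y z. (x, (y, z)) \<in> P"
proof -
  have "((x, x), ((), ())) \<in> discard X" using assms by (simp add: discard_def)
  then have "((x, x), ((), ())) \<in> M O discard (X \<times> Z)" by (simp only: causality)
  then obtain y w y' w' where "((x, x), ((y, w), (y', w'))) \<in> M" by (auto simp: relcomp_unfold)
  then show ?thesis unfolding M_mem_iff by blast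
qed

lemma output_composition:
  assumes xy: "(x, (y, z)) \<in> P" and yy': "(y, (y', z')) \<in> P"
  shows "component z' = component z \<and> (\<exists>z''. (x, (y', z'')) \<in> P)"
proof -
  have "(((y, z), (y, z)), (((y', z'), z), ((y', z'), z))) \<in> cpm_tensor M (cpm_id Z)"
    using M_diagonal[OF yy'] P_memD[OF xy] by (auto simp: cpm_tensor_def cpm_id_def cpm_hat_def)
  moreover have "((((y', z'), z), ((y', z'), z)), ((y', (z', z)), (y', (z', z))))
      \<in> cpm_hat (assoc_rel X Z Z)"
    using P_memD[OF xy] P_memD[OF yy'] by (auto simp: cpm_hat_def assoc_rel_def)
  ultimately have "((x, x), ((y', (z', z)), (y', (z', z))))
      \<in> M O cpm_tensor M (cpm_id Z) O cpm_hat (assoc_rel X Z Z)"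
    using M_diagonal[OF xy] by blast
  also have "\<dots> = M O cpm_tensor (cpm_id X) (cpm_hat (gd_comult L G))"
    by (rule idempotence)
  finally obtain q where M_q: "((x, x), q) \<in> M"
    and comult_q: "(q, ((y', (z', z)), (y', (z', z)))) \<in> cpm_tensor (cpm_id X) (cpm_hat (gd_comult L G))"
    by blast
  obtain a u a' u' where q: "q = ((a, u), (a', u'))" by (cases q) auto
  from comult_q obtain l where "a = y'" "l \<in> L" "z' \<in> carrier (G l)" "z \<in> carrier (G l)"
    unfolding q by (auto simp: cpm_tensor_def cpm_id_def cpm_hat_def gd_comult_def)
  then show ?thesis
    using M_q gd_component_eq[OF groupoid] unfolding q M_mem_iff by blast
qed

lemma output_reversal:
  assumes xy: "(x, (y, z)) \<in> P"
  shows "\<exists>z'. (y, (x, z')) \<in> P \<and> component z' = component z"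
proof -
  define l where "l = component z"
  have l: "l \<in> L" "z \<in> carrier (G l)"
    using gd_component[OF groupoid] P_memD[OF xy] by (simp_all add: l_def)
  interpret comm_group "G l" using groupoid l(1) by (simp add: abelian_groupoid_def)
  define u where "u = inv\<^bsub>G l\<^esub> z"
  have u: "u \<in> carrier (G l)" "z \<otimes>\<^bsub>G l\<^esub> u = \<one>\<^bsub>G l\<^esub>" using l by (simp_all add: u_def)
  have "u \<in> Z" using u(1) l(1) groupoid by (auto simp: abelian_groupoid_def)
  have "(((x, u), (x, u)), (((y, z), u), ((y, z), u))) \<in> cpm_tensor M (cpm_id Z)"
    using M_diagonal[OF xy] \<open>u \<in> Z\<close> by (auto simp: cpm_tensor_def cpm_id_def cpm_hat_def)
  moreover have "((((y, z), u), ((y, z), u)), ((y, (z, u)), (y, (z, u)))) \<in> cpm_hat (assoc_rel X Z Z)"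
    using P_memD[OF xy] \<open>u \<in> Z\<close> by (auto simp: cpm_hat_def assoc_rel_def)
  moreover have "(((y, (z, u)), (y, (z, u))), ((y, ()), (y, ())))
      \<in> cpm_tensor (cpm_id X) (cpm_hat (gd_pair L G))"
    using P_memD[OF xy] u l by (auto simp: cpm_tensor_def cpm_id_def cpm_hat_def gd_pair_def)
  moreover have "(((y, ()), (y, ())), (y, y)) \<in> cpm_hat (runit_rel X)"
    using P_memD[OF xy] by (auto simp: cpm_hat_def runit_rel_def)
  ultimately have "(((x, u), (x, u)), (y, y)) \<in> cpm_tensor M (cpm_id Z) O cpm_hat (assoc_rel X Z Z)
        O cpm_tensor (cpm_id X) (cpm_hat (gd_pair L G)) O cpm_hat (runit_rel X)"
    by blast
  also have "\<dots> = cpm_tensor (cpm_id X) (gd_dec L G) O cpm_hat (converse P)"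
    by (rule self_adjointness)
  finally obtain q where dec_q: "(((x, u), (x, u)), q) \<in> cpm_tensor (cpm_id X) (gd_dec L G)"
    and P_q: "(q, (y, y)) \<in> cpm_hat (converse P)"
    by blast
  obtain a v a' v' where q: "q = ((a, v), (a', v'))" by (cases q) auto
  from dec_q obtain m where m: "a = x" "m \<in> L" "v \<in> carrier (G m)" "u \<in> carrier (G m)"
    unfolding q by (auto simp: cpm_tensor_def cpm_id_def cpm_hat_def gd_dec_def)
  have "component v = component u" using gd_component_eq[OF groupoid m(2-4)] .
  also have "\<dots> = component z" using gd_component_eq[OF groupoid l(1) u(1) l(2)] .
  finally have "component v = component z" .
  moreover from P_q have "(y, (a, v)) \<in> P" unfolding q by (auto simp: cpm_hat_def)
  ultimately show ?thesis using m(1) by blast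
qed

definition transitions :: "('x \<times> 'x) set" where
  "transitions = {(x, y). \<exists>z. (x, (y, z)) \<in> P}"

lemma equiv_transitions: "equiv X transitions"
proof (rule equivI)
  show "transitions \<subseteq> X \<times> X" using P_subset by (auto simp: transitions_def)
  show "sym transitions"
    using output_reversal unfolding transitions_def sym_def by blast
  show "trans transitions"
    using output_composition unfolding transitions_def trans_def by blast
  show "refl_on X transitions"
  proof
    fix x assume "x \<in> X"
    then obtain y z where xy: "(x, (y, z)) \<in> P" using output_exists by blast
    then obtain z' where "(y, (x, z')) \<in> P" using output_reversal by blast
    then show "(x, x) \<in> transitions" using output_composition[OF xy] by (simp add: transitions_def)
  qed
qed

definition label :: "'x \<Rightarrow> 'l" where
  "label x = component (SOME z. \<exists>y. (x, (y, z)) \<in> P)"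

lemma component_output:
  assumes xy: "(x, (y, z)) \<in> P"
  shows "component z = label x"
proof -
  let ?z = "SOME z. \<exists>y. (x, (y, z)) \<in> P"
  obtain y' where x_out: "(x, (y', ?z)) \<in> P"
    using someI_ex[of "\<lambda>z. \<exists>y. (x, (y, z)) \<in> P"] xy by blast
  obtain z' where y_out: "(y, (x, z')) \<in> P" and "component z' = component z"
    using output_reversal[OF xy] by blast
  then show ?thesis
    using output_composition[OF y_out x_out] unfolding label_def by simp
qed

lemma label_in_L: "x \<in> X \<Longrightarrow> label x \<in> L"
  using output_exists component_output gd_component(1)[OF groupoid] P_memD by metis

lemma label_transitions_invariant:
  assumes "(x, x') \<in> transitions"
  shows "label x = label x'"
proof -
  obtain e where e: "(x, (x', e)) \<in> P" using assms by (auto simp: transitions_def)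
  obtain y c where "(x', (y, c)) \<in> P" using output_exists P_memD[OF e] by blast
  then show ?thesis using output_composition[OF e] component_output e by metis
qed

definition coincident_outputs :: "(('x \<times> 'x) \<times> ('z \<times> 'z)) set" where
  "coincident_outputs = {((x, x'), (z, z')) | x x' z z'. \<exists>y. (x, (y, z)) \<in> P \<and> (x', (y, z')) \<in> P}"

lemma demolition_eq: "demolition X Z M = coincident_outputs O gd_dec L G"
proof (intro equalityI)
  show "demolition X Z M \<subseteq> coincident_outputs O gd_dec L G"
    unfolding demolition_def coincident_outputs_def
    by (auto simp: M_mem_iff relcomp_unfold cpm_tensor_def discard_def cpm_id_def cpm_hat_def
        lunit_rel_def) blast
next
  show "coincident_outputs O gd_dec L G \<subseteq> demolition X Z M"
  proof
    fix p assume "p \<in> coincident_outputs O gd_dec L G"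
    then obtain x x' y z z' w w' where p: "p = ((x, x'), (w, w'))"
        and out: "(x, (y, z)) \<in> P" "(x', (y, z')) \<in> P"
        and dec: "((z, z'), (w, w')) \<in> gd_dec L G"
      by (auto simp: coincident_outputs_def relcomp_unfold)
    have w: "w \<in> Z" "w' \<in> Z"
      using dec groupoid by (auto simp: gd_dec_def abelian_groupoid_def)
    have "((x, x'), ((y, w), (y, w'))) \<in> M" using out dec by (auto simp: M_mem_iff)
    moreover have "(((y, w), (y, w')), (((), w), ((), w'))) \<in> cpm_tensor (discard X) (cpm_id Z)"
      using P_memD[OF out(1)] w by (auto simp: cpm_tensor_def discard_def cpm_id_def cpm_hat_def)
    moreover have "((((), w), ((), w')), (w, w')) \<in> cpm_hat (lunit_rel Z)"
      using w by (auto simp: cpm_hat_def lunit_rel_def)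
    ultimately show "p \<in> demolition X Z M" unfolding demolition_def p by blast
  qed
qed

lemma demolition_O_rho_dag:
  assumes "l \<in> L"
  shows "demolition X Z M O rho_dag (G l) = {p \<in> transitions. label (fst p) = l} \<times> {((), ())}"
proof -
  have "demolition X Z M O rho_dag (G l) = coincident_outputs O rho_dag (G l)"
    using gd_dec_O_rho_dag[OF groupoid assms] by (simp add: demolition_eq O_assoc)
  also have "\<dots> = {p \<in> transitions. label (fst p) = l} \<times> {((), ())}"
  proof (intro equalityI subsetI)
    fix p assume "p \<in> coincident_outputs O rho_dag (G l)"
    then obtain x x' y z z' where p: "p = ((x, x'), ((), ()))"
        and out: "(x, (y, z)) \<in> P" "(x', (y, z')) \<in> P" and "z \<in> carrier (G l)"
      by (auto simp: coincident_outputs_def rho_dag_def)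
    then have "label x = l"
      using component_output in_carrier_iff_gd_component[OF groupoid assms] by metis
    moreover have "(x, x') \<in> transitions"
      using out equiv_transitions unfolding transitions_def equiv_def sym_def trans_def by blast
    ultimately show "p \<in> {p \<in> transitions. label (fst p) = l} \<times> {((), ())}" using p by simp
  next
    fix p assume "p \<in> {p \<in> transitions. label (fst p) = l} \<times> {((), ())}"
    then obtain x x' e where p: "p = ((x, x'), ((), ()))" "label x = l"
        and e: "(x, (x', e)) \<in> P"
      by (auto simp: transitions_def)
    have "(x, x') \<in> transitions" using e by (auto simp: transitions_def)
    then have "label x' = l" using label_transitions_invariant p(2) by simp
    obtain c where c: "(x', (x', c)) \<in> P"
      using equiv_transitions P_memD[OF e] unfolding transitions_def equiv_def refl_on_def by blast
    have "e \<in> carrier (G l)" "c \<in> carrier (G l)"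
      using component_output[OF e] component_output[OF c] \<open>label x' = l\<close> p(2) P_memD[OF e]
        P_memD[OF c] in_carrier_iff_gd_component[OF groupoid assms] by simp_all
    then have "((e, c), ((), ())) \<in> rho_dag (G l)" by (simp add: rho_dag_def)
    moreover have "((x, x'), (e, c)) \<in> coincident_outputs"
      using e c by (auto simp: coincident_outputs_def)
    ultimately show "p \<in> coincident_outputs O rho_dag (G l)" using p(1) by blast
  qed
  finally show ?thesis .
qed

end

theorem mainTheorem5:
  fixes X :: "'x set" and Z :: "'z set" and L :: "'l set" and G :: "'l \<Rightarrow> 'z monoid"
    and P :: "('x \<times> ('x \<times> 'z)) set"
    and M :: "(('x \<times> 'x) \<times> (('x \<times> 'z) \<times> ('x \<times> 'z))) set"
  assumes "finite X" and "finite Z"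
    and "abelian_groupoid Z L G"
    and "nd_measurement X Z L G P M"
  shows "\<exists>(\<Gamma> :: nat set) (H :: nat \<Rightarrow> 'x monoid) (f :: nat \<Rightarrow> 'l).
           abelian_groupoid X \<Gamma> H \<and> (\<forall>\<gamma>\<in>\<Gamma>. f \<gamma> \<in> L) \<and>
           (\<forall>l\<in>L. demolition X Z M O rho_dag (G l)
                   = (\<Union>\<gamma>\<in>{\<gamma>\<in>\<Gamma>. f \<gamma> = l}. gd_dec \<Gamma> H O rho_dag (H \<gamma>)))"
proof -
  interpret nd_measurement_on_groupoid X Z L G P M using assms(3,4) by unfold_locales
  obtain \<Gamma> :: "nat set" and H :: "nat \<Rightarrow> 'x monoid" and f :: "nat \<Rightarrow> 'l"
    where groupoid_X: "abelian_groupoid X \<Gamma> H" and f: "f ` \<Gamma> \<subseteq> label ` X"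
      and classes: "\<And>l. {p \<in> transitions. label (fst p) = l}
                     = (\<Union>\<gamma>\<in>{\<gamma>\<in>\<Gamma>. f \<gamma> = l}. carrier (H \<gamma>) \<times> carrier (H \<gamma>))"
    using abelian_groupoid_on_labelled_quotient[where lab = label, OF assms(1) equiv_transitions
        label_transitions_invariant] by meson
  have "demolition X Z M O rho_dag (G l)
        = (\<Union>\<gamma>\<in>{\<gamma>\<in>\<Gamma>. f \<gamma> = l}. gd_dec \<Gamma> H O rho_dag (H \<gamma>))" if "l \<in> L" for l
  proof -
    have "demolition X Z M O rho_dag (G l) = {p \<in> transitions. label (fst p) = l} \<times> {((), ())}"
      using that by (rule demolition_O_rho_dag)
    also have "\<dots> = (\<Union>\<gamma>\<in>{\<gamma>\<in>\<Gamma>. f \<gamma> = l}. rho_dag (H \<gamma>))"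
      by (auto simp: classes rho_dag_eq)
    also have "\<dots> = (\<Union>\<gamma>\<in>{\<gamma>\<in>\<Gamma>. f \<gamma> = l}. gd_dec \<Gamma> H O rho_dag (H \<gamma>))"
      using gd_dec_O_rho_dag[OF groupoid_X] by simp
    finally show ?thesis .
  qed
  moreover have "\<forall>\<gamma>\<in>\<Gamma>. f \<gamma> \<in> L" using f label_in_L by auto
  ultimately show ?thesis using groupoid_X by blast
qed

end
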